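(* Let $G$ be an additive group and let $(X,\rho)$ be the metric space described below. Then $X$ is an $\mathbb R$-tree.
   Context: A function on an interval $(\alpha,\beta)$ is piecewise constant from the left if for every $x$ there is $\varepsilon>0$ with $f$ constant on $[x-\varepsilon,x]$. $X$ is the set of pairs $(f,a_f)$, $a_f>0$ real, $f:(a_f,+\infty)\to G$ piecewise constant from the left with $f|_{(b_f,+\infty)}\equiv0$ for some $b_f\ge a_f$. Order: $(f,a_f)\preceq(g,a_g)$ iff $a_f\le a_g$ and $f|_{(a_g,+\infty)}=g$; any two elements $p,q$ have a supremum $p\vee q$. Metric: $\rho((f,a_f),(g,a_g))=|a_f-a_g|$ if the pairs are comparable, and $\rho(p,q)=\rho(p,p\vee q)+\rho(p\vee q,q)$ otherwise. An $\mathbb R$-tree is a geodesic metric space in which any two points are joined by a unique segment and $[xy]\subset[xz]\cup[zy]$ for all $x,y,z$. *)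

theory Defs
  imports "HOL-Analysis.Analysis"
begin

text \<open>An element (f, a) of X is represented by a function f :: real \<Rightarrow> 'g together with
  the real a; only the values of f on the open ray (a, +\<infinity>) are meaningful, so we
  normalise f to be 0 on (-\<infinity>, a].\<close>

type_synonym 'g pt = "(real \<Rightarrow> 'g) \<times> real"

definition pc_left_on :: "real \<Rightarrow> (real \<Rightarrow> 'g) \<Rightarrow> bool" where
  "pc_left_on \<alpha> f \<longleftrightarrow>
     (\<forall>x. \<alpha> < x \<longrightarrow> (\<exists>\<epsilon>>0. \<alpha> < x - \<epsilon> \<and> (\<forall>y. x - \<epsilon> \<le> y \<and> y \<le> x \<longrightarrow> f y = f x)))"

definition Xset :: "('g::ab_group_add) pt set" where
  "Xset = {(f, a). 0 < a \<and> (\<forall>x. x \<le> a \<longrightarrow> f x = 0) \<and> pc_left_on a f \<and>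
                   (\<exists>b\<ge>a. \<forall>x. b < x \<longrightarrow> f x = 0)}"

definition le_pt :: "('g::ab_group_add) pt \<Rightarrow> 'g pt \<Rightarrow> bool" where
  "le_pt p q \<longleftrightarrow> snd p \<le> snd q \<and> (\<forall>x. snd q < x \<longrightarrow> fst p x = fst q x)"

definition is_ub :: "('g::ab_group_add) pt \<Rightarrow> 'g pt \<Rightarrow> 'g pt \<Rightarrow> bool" where
  "is_ub p q s \<longleftrightarrow> s \<in> Xset \<and> le_pt p s \<and> le_pt q s"

definition join_pt :: "('g::ab_group_add) pt \<Rightarrow> 'g pt \<Rightarrow> 'g pt" where
  "join_pt p q = (THE s. is_ub p q s \<and> (\<forall>u. is_ub p q u \<longrightarrow> le_pt s u))"

definition comparable_pt :: "('g::ab_group_add) pt \<Rightarrow> 'g pt \<Rightarrow> bool" where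
  "comparable_pt p q \<longleftrightarrow> le_pt p q \<or> le_pt q p"

definition rho_cmp :: "('g::ab_group_add) pt \<Rightarrow> 'g pt \<Rightarrow> real" where
  "rho_cmp p q = \<bar>snd p - snd q\<bar>"

definition rho :: "('g::ab_group_add) pt \<Rightarrow> 'g pt \<Rightarrow> real" where
  "rho p q = (if comparable_pt p q then rho_cmp p q
              else rho_cmp p (join_pt p q) + rho_cmp (join_pt p q) q)"

definition geodesic_segment :: "'a set \<Rightarrow> ('a \<Rightarrow> 'a \<Rightarrow> real) \<Rightarrow> 'a \<Rightarrow> 'a \<Rightarrow> 'a set \<Rightarrow> bool" where
  "geodesic_segment S d x y A \<longleftrightarrow>
     (\<exists>\<gamma>. (\<forall>t\<in>{0..d x y}. \<gamma> t \<in> S) \<and> \<gamma> 0 = x \<and> \<gamma> (d x y) = y \<and>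
          (\<forall>s\<in>{0..d x y}. \<forall>t\<in>{0..d x y}. d (\<gamma> s) (\<gamma> t) = \<bar>s - t\<bar>) \<and>
          A = \<gamma> ` {0..d x y})"

definition R_tree :: "'a set \<Rightarrow> ('a \<Rightarrow> 'a \<Rightarrow> real) \<Rightarrow> bool" where
  "R_tree S d \<longleftrightarrow> Metric_space S d \<and>
     (\<forall>x\<in>S. \<forall>y\<in>S. \<exists>!A. geodesic_segment S d x y A) \<and>
     (\<forall>x\<in>S. \<forall>y\<in>S. \<forall>z\<in>S. \<forall>A B C. geodesic_segment S d x y A \<and> geodesic_segment S d x z B \<and>
         geodesic_segment S d z y C \<longrightarrow> A \<subseteq> B \<union> C)"

end

theory Submission
  imports Defs
begin

text \<open>A point p = (f, a) of X sits at height a, and its truncations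
  trunc p t = (f restricted to (t, +infinity), t), for t \<ge> a, form a ray from p upwards.
  Two points p, q have equal truncations exactly from their join height h(p, q) on; this infimum
  is attained because agreement on every (t, +infinity) with t > c is agreement on (c, +infinity).
  Hence the supremum of p and q is trunc p h(p, q), so rho(p, q) = 2 h(p, q) - a_p - a_q, and h
  satisfies the ultrametric inequality h(x, y) \<le> max h(x, z) h(z, y). The union of the rays of
  x and y below h(x, y) is a geodesic segment; every w with rho(x, w) + rho(w, y) = rho(x, y)
  lies on it, which gives uniqueness, and the ultrametric inequality gives the tripod
  condition.\<close>

definition trunc :: "('g::ab_group_add) pt \<Rightarrow> real \<Rightarrow> 'g pt" where
  "trunc p t = ((\<lambda>x. if t < x then fst p x else 0), t)"

lemma snd_trunc [simp]: "snd (trunc p t) = t"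
  by (simp add: trunc_def)

lemma trunc_trunc: "s \<le> t \<Longrightarrow> trunc (trunc p s) t = trunc p t"
  by (auto simp: trunc_def fun_eq_iff)

lemma trunc_eq_trunc_iff: "trunc p t = trunc q t \<longleftrightarrow> (\<forall>x>t. fst p x = fst q x)"
  by (auto simp: trunc_def fun_eq_iff)

lemma trunc_snd: "p \<in> Xset \<Longrightarrow> trunc p (snd p) = p"
  by (cases p) (auto simp: trunc_def Xset_def fun_eq_iff)

lemma pc_left_on_restrict:
  assumes f: "pc_left_on a f" and "a \<le> t"
  shows "pc_left_on t (\<lambda>x. if t < x then f x else 0)"
  unfolding pc_left_on_def
proof (intro allI impI)
  fix x assume "t < x"
  with \<open>a \<le> t\<close> have "a < x" by simp
  then obtain e where e: "e > 0" "\<forall>y. x - e \<le> y \<and> y \<le> x \<longrightarrow> f y = f x"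
    using f[unfolded pc_left_on_def, rule_format, of x] by blast
  obtain d where "t < d" "d < x"
    using dense[OF \<open>t < x\<close>] by blast
  define e' where "e' = min e (x - d)"
  have e': "e' > 0" "e' \<le> e" "t < x - e'"
    using e(1) \<open>t < d\<close> \<open>d < x\<close> by (simp_all add: e'_def)
  show "\<exists>\<epsilon>>0. t < x - \<epsilon> \<and> (\<forall>y. x - \<epsilon> \<le> y \<and> y \<le> x \<longrightarrow>
      (if t < y then f y else 0) = (if t < x then f x else 0))"
  proof (intro exI[of _ e'] conjI allI impI)
    fix y assume "x - e' \<le> y \<and> y \<le> x"
    with e'(2,3) have "t < y" "x - e \<le> y" "y \<le> x" by linarith+
    with e(2) have "f y = f x" by blast
    with \<open>t < y\<close> \<open>t < x\<close> show "(if t < y then f y else 0) = (if t < x then f x else 0)" by simp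
  qed (use e' in simp_all)
qed

lemma trunc_in_Xset:
  assumes "p \<in> Xset" "snd p \<le> t"
  shows "trunc p t \<in> Xset"
proof -
  obtain f a where p: "p = (f, a)" by (cases p)
  with assms obtain b where a: "0 < a" "a \<le> t" "pc_left_on a f" and b: "\<forall>x>b. f x = 0"
    by (auto simp: Xset_def)
  have "pc_left_on t (\<lambda>x. if t < x then f x else 0)"
    using a(2) by (rule pc_left_on_restrict[OF a(3)])
  moreover have "\<forall>x>max b t. (if t < x then f x else 0) = 0"
    using b by simp
  ultimately show ?thesis
    using a unfolding p trunc_def Xset_def fst_conv by (auto intro!: exI[of _ "max b t"])
qed

lemma le_pt_iff_trunc: "s \<in> Xset \<Longrightarrow> le_pt p s \<longleftrightarrow> snd p \<le> snd s \<and> s = trunc p (snd s)"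
  using trunc_snd[of s] trunc_eq_trunc_iff[of s "snd s" p] unfolding le_pt_def by metis

definition join_height :: "('g::ab_group_add) pt \<Rightarrow> 'g pt \<Rightarrow> real" where
  "join_height p q = Inf {t. max (snd p) (snd q) \<le> t \<and> trunc p t = trunc q t}"

lemma join_height_commute: "join_height p q = join_height q p"
  unfolding join_height_def by (metis max.commute)

lemma
  assumes "p \<in> Xset" "q \<in> Xset"
  shows join_height_ge: "max (snd p) (snd q) \<le> join_height p q"
    and trunc_join_height: "trunc p (join_height p q) = trunc q (join_height p q)"
proof -
  define S where "S = {t. max (snd p) (snd q) \<le> t \<and> trunc p t = trunc q t}"
  obtain bp bq where "\<forall>x>bp. fst p x = 0" "\<forall>x>bq. fst q x = 0"
    using assms by (auto simp: Xset_def)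
  then have "max (max (snd p) (snd q)) (max bp bq) \<in> S"
    by (auto simp: S_def trunc_eq_trunc_iff)
  then have "S \<noteq> {}" by blast
  then show ge: "max (snd p) (snd q) \<le> join_height p q"
    unfolding join_height_def S_def[symmetric] by (rule cInf_greatest) (simp add: S_def)
  have "fst p x = fst q x" if "join_height p q < x" for x
  proof -
    obtain t where "t \<in> S" "t < x"
      using cInf_less_iff[OF \<open>S \<noteq> {}\<close>, of x] \<open>join_height p q < x\<close>
      by (auto simp: join_height_def S_def[symmetric] bdd_below_def S_def)
    then show ?thesis by (simp add: S_def trunc_eq_trunc_iff)
  qed
  then show "trunc p (join_height p q) = trunc q (join_height p q)"
    by (simp add: trunc_eq_trunc_iff)
qed

lemma trunc_eq_iff_join_height_le:
  assumes "p \<in> Xset" "q \<in> Xset" "max (snd p) (snd q) \<le> t"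
  shows "trunc p t = trunc q t \<longleftrightarrow> join_height p q \<le> t"
proof
  assume "trunc p t = trunc q t"
  with assms(3) show "join_height p q \<le> t"
    unfolding join_height_def by (intro cInf_lower) (auto simp: bdd_below_def)
next
  assume "join_height p q \<le> t"
  then show "trunc p t = trunc q t"
    using trunc_join_height[OF assms(1,2)] join_height_ge[OF assms(1,2)]
    by (metis trunc_trunc)
qed

lemma join_height_eqI:
  assumes "p \<in> Xset" "q \<in> Xset" "max (snd p) (snd q) \<le> c"
    and "\<And>t. max (snd p) (snd q) \<le> t \<Longrightarrow> trunc p t = trunc q t \<longleftrightarrow> c \<le> t"
  shows "join_height p q = c"
  using assms(4)[of c] assms(4)[OF join_height_ge[OF assms(1,2)]] assms(3)
    trunc_join_height[OF assms(1,2)] trunc_eq_iff_join_height_le[OF assms(1-3)]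
  by auto

lemma join_height_trunc:
  assumes "p \<in> Xset" "snd p \<le> t"
  shows "join_height p (trunc p t) = t"
  using assms by (intro join_height_eqI) (auto simp: trunc_in_Xset trunc_trunc)

lemma join_height_self: "p \<in> Xset \<Longrightarrow> join_height p p = snd p"
  using join_height_trunc[of p "snd p"] by (simp add: trunc_snd)

lemma join_height_trunc_trunc:
  assumes "p \<in> Xset" "q \<in> Xset"
    and "snd p \<le> s" "s \<le> join_height p q" "snd q \<le> t" "t \<le> join_height p q"
  shows "join_height (trunc p s) (trunc q t) = join_height p q"
  using assms trunc_eq_iff_join_height_le[OF assms(1,2)]
  by (intro join_height_eqI) (auto simp: trunc_in_Xset trunc_trunc)

lemma join_height_ultra:
  assumes "x \<in> Xset" "y \<in> Xset" "z \<in> Xset"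
  shows "join_height x y \<le> max (join_height x z) (join_height z y)"
proof -
  define t where "t = max (join_height x z) (join_height z y)"
  have "snd x \<le> t" "snd y \<le> t" "snd z \<le> t"
    using join_height_ge[OF assms(1,3)] join_height_ge[OF assms(3,2)] by (auto simp: t_def)
  moreover have "trunc x t = trunc z t" "trunc z t = trunc y t"
    using calculation trunc_eq_iff_join_height_le[OF assms(1,3), of t]
      trunc_eq_iff_join_height_le[OF assms(3,2), of t] by (auto simp: t_def)
  ultimately show ?thesis
    using trunc_eq_iff_join_height_le[OF assms(1,2), of t] by (simp add: t_def)
qed

lemma join_pt_eq_trunc:
  assumes "p \<in> Xset" "q \<in> Xset"
  shows "join_pt p q = trunc p (join_height p q)"
proof -
  let ?h = "join_height p q"
  have h: "snd p \<le> ?h" "snd q \<le> ?h"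
    using join_height_ge[OF assms] by auto
  have ub: "is_ub p q (trunc p ?h)"
    using h trunc_join_height[OF assms] trunc_in_Xset[OF assms(1) h(1)]
    by (simp add: is_ub_def le_pt_iff_trunc)
  have least: "le_pt (trunc p ?h) u" if "is_ub p q u" for u
  proof -
    from that have u: "u \<in> Xset" "snd p \<le> snd u" "snd q \<le> snd u"
      "u = trunc p (snd u)" "u = trunc q (snd u)"
      by (auto simp: is_ub_def le_pt_iff_trunc)
    then have "?h \<le> snd u"
      using trunc_eq_iff_join_height_le[OF assms, of "snd u"] by simp
    with u show ?thesis
      by (simp add: le_pt_iff_trunc trunc_trunc)
  qed
  have antisym: "s = u" if "s \<in> Xset" "u \<in> Xset" "le_pt s u" "le_pt u s" for s u
    using that by (metis le_pt_iff_trunc order_antisym trunc_snd)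
  show ?thesis
    unfolding join_pt_def
  proof (rule the_equality)
    show "is_ub p q (trunc p ?h) \<and> (\<forall>u. is_ub p q u \<longrightarrow> le_pt (trunc p ?h) u)"
      using ub least by blast
    fix s assume s: "is_ub p q s \<and> (\<forall>u. is_ub p q u \<longrightarrow> le_pt s u)"
    then have "le_pt s (trunc p ?h)" "le_pt (trunc p ?h) s"
      using ub least by blast+
    with s ub show "s = trunc p ?h"
      by (intro antisym) (simp_all add: is_ub_def)
  qed
qed

lemma rho_eq_join_height:
  assumes "p \<in> Xset" "q \<in> Xset"
  shows "rho p q = 2 * join_height p q - snd p - snd q"
proof (cases "comparable_pt p q")
  case True
  then consider "le_pt p q" | "le_pt q p"
    by (auto simp: comparable_pt_def)
  then show ?thesis
  proof cases
    case 1
    with assms have "snd p \<le> snd q" "join_height p q = snd q"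
      by (metis join_height_trunc le_pt_iff_trunc)+
    with True show ?thesis by (simp add: rho_def rho_cmp_def)
  next
    case 2
    with assms have "snd q \<le> snd p" "join_height p q = snd p"
      by (metis join_height_commute join_height_trunc le_pt_iff_trunc)+
    with True show ?thesis by (simp add: rho_def rho_cmp_def)
  qed
next
  case False
  with join_height_ge[OF assms] show ?thesis
    by (simp add: rho_def rho_cmp_def join_pt_eq_trunc[OF assms])
qed

lemma Metric_space_Xset: "Metric_space (Xset :: ('g::ab_group_add) pt set) rho"
proof
  fix x y :: "'g pt"
  show "0 \<le> rho x y"
    by (simp add: rho_def rho_cmp_def)
  show "rho x y = rho y x"
    unfolding rho_def rho_cmp_def comparable_pt_def join_pt_def is_ub_def
    by (simp add: conj_commute disj_commute abs_minus_commute add.commute)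
next
  fix x y :: "'g pt" assume xy: "x \<in> Xset" "y \<in> Xset"
  show "rho x y = 0 \<longleftrightarrow> x = y"
  proof
    assume "rho x y = 0"
    with join_height_ge[OF xy] rho_eq_join_height[OF xy]
    have "join_height x y = snd x" "join_height x y = snd y"
      by linarith+
    with trunc_join_height[OF xy] show "x = y"
      by (metis trunc_snd xy)
  qed (simp add: rho_eq_join_height join_height_self xy)
next
  fix x y z :: "'g pt" assume xyz: "x \<in> Xset" "y \<in> Xset" "z \<in> Xset"
  have "join_height x z \<le> max (join_height x y) (join_height y z)"
    using join_height_ultra[OF xyz(1,3,2)] .
  moreover have "snd y \<le> join_height x y" "snd y \<le> join_height y z"
    using join_height_ge[OF xyz(1,2)] join_height_ge[OF xyz(2,3)] by auto
  ultimately show "rho x z \<le> rho x y + rho y z"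
    unfolding rho_eq_join_height[OF xyz(1,3)] rho_eq_join_height[OF xyz(1,2)]
      rho_eq_join_height[OF xyz(2,3)] by linarith
qed

lemma rho_trunc_trunc:
  assumes "p \<in> Xset" "snd p \<le> s" "snd p \<le> t"
  shows "rho (trunc p s) (trunc p t) = \<bar>s - t\<bar>"
proof -
  have X: "trunc p s \<in> Xset" "trunc p t \<in> Xset"
    using assms trunc_in_Xset by blast+
  have "join_height (trunc p s) (trunc p t) = max s t"
    using X by (intro join_height_eqI) (auto simp: trunc_trunc)
  then show ?thesis
    by (simp add: rho_eq_join_height[OF X] max_def)
qed

lemma rho_trunc_trunc_join:
  assumes "x \<in> Xset" "y \<in> Xset"
    and "snd x \<le> s" "s \<le> join_height x y" "snd y \<le> t" "t \<le> join_height x y"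
  shows "rho (trunc x s) (trunc y t) = 2 * join_height x y - s - t"
  using assms rho_eq_join_height[of "trunc x s" "trunc y t"]
  by (simp add: trunc_in_Xset join_height_trunc_trunc)

text \<open>Arc-length parametrisation of the path that climbs the ray of x up to the join height
  and then descends the ray of y.\<close>
definition tree_geodesic :: "('g::ab_group_add) pt \<Rightarrow> 'g pt \<Rightarrow> real \<Rightarrow> 'g pt" where
  "tree_geodesic x y s =
     (if s \<le> join_height x y - snd x then trunc x (snd x + s)
      else trunc y (2 * join_height x y - snd x - s))"

lemma tree_geodesic_isometric:
  assumes xy: "x \<in> Xset" "y \<in> Xset"
    and "s \<in> {0..rho x y}" "t \<in> {0..rho x y}"
  shows "rho (tree_geodesic x y s) (tree_geodesic x y t) = \<bar>s - t\<bar>"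
proof -
  define h where "h = join_height x y"
  have h: "snd x \<le> h" "snd y \<le> h" "rho x y = 2 * h - snd x - snd y"
    using join_height_ge[OF xy] rho_eq_join_height[OF xy] by (auto simp: h_def)
  consider "s \<le> h - snd x" "t \<le> h - snd x" | "s \<le> h - snd x" "\<not> t \<le> h - snd x"
    | "\<not> s \<le> h - snd x" "t \<le> h - snd x" | "\<not> s \<le> h - snd x" "\<not> t \<le> h - snd x"
    by blast
  then show ?thesis
  proof cases
    case 1
    with assms show ?thesis
      by (simp add: tree_geodesic_def h_def[symmetric] rho_trunc_trunc)
  next
    case 2
    with assms h show ?thesis
      by (simp add: tree_geodesic_def h_def[symmetric] rho_trunc_trunc_join[OF xy, folded h_def])
  next
    case 3
    with assms h show ?thesis
      by (subst Metric_space.commute[OF Metric_space_Xset])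
        (simp add: tree_geodesic_def h_def[symmetric] rho_trunc_trunc_join[OF xy, folded h_def])
  next
    case 4
    with assms h show ?thesis
      by (simp add: tree_geodesic_def h_def[symmetric] rho_trunc_trunc)
  qed
qed

lemma tree_geodesic_0:
  assumes "x \<in> Xset" "y \<in> Xset"
  shows "tree_geodesic x y 0 = x"
  using join_height_ge[OF assms] by (simp add: tree_geodesic_def trunc_snd assms)

lemma geodesic_segment_tree_geodesic:
  assumes xy: "x \<in> Xset" "y \<in> Xset"
  shows "geodesic_segment Xset rho x y (tree_geodesic x y ` {0..rho x y})"
proof -
  have h: "snd x \<le> join_height x y" "snd y \<le> join_height x y"
    "rho x y = 2 * join_height x y - snd x - snd y"
    using join_height_ge[OF xy] rho_eq_join_height[OF xy] by auto
  have "tree_geodesic x y s \<in> Xset" if "s \<in> {0..rho x y}" for s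
    using that h by (auto simp: tree_geodesic_def intro!: trunc_in_Xset xy)
  moreover note tree_geodesic_0[OF xy]
  moreover have "tree_geodesic x y (rho x y) = y"
    using h trunc_join_height[OF xy] trunc_snd[OF xy(2)]
    by (cases "snd y = join_height x y") (auto simp: tree_geodesic_def)
  ultimately show ?thesis
    unfolding geodesic_segment_def using tree_geodesic_isometric[OF xy]
    by (intro exI[of _ "tree_geodesic x y"]) auto
qed

definition tree_segment :: "('g::ab_group_add) pt \<Rightarrow> 'g pt \<Rightarrow> 'g pt set" where
  "tree_segment x y = trunc x ` {snd x..join_height x y} \<union> trunc y ` {snd y..join_height x y}"

lemma tree_geodesic_image:
  assumes xy: "x \<in> Xset" "y \<in> Xset"
  shows "tree_geodesic x y ` {0..rho x y} = tree_segment x y"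
proof -
  define h where "h = join_height x y"
  have h: "snd x \<le> h" "snd y \<le> h" "rho x y = 2 * h - snd x - snd y"
    "trunc x h = trunc y h"
    using join_height_ge[OF xy] rho_eq_join_height[OF xy] trunc_join_height[OF xy]
    by (auto simp: h_def)
  have "tree_geodesic x y s \<in> tree_segment x y" if "s \<in> {0..rho x y}" for s
    using that h by (auto simp: tree_geodesic_def tree_segment_def h_def[symmetric])
  moreover have "trunc x t \<in> tree_geodesic x y ` {0..rho x y}" if "t \<in> {snd x..h}" for t
    using that h by (intro image_eqI[of _ _ "t - snd x"]) (auto simp: tree_geodesic_def h_def)
  moreover have "trunc y t \<in> tree_geodesic x y ` {0..rho x y}" if "t \<in> {snd y..h}" for t
  proof (cases "t = h")
    case True
    with h calculation(2)[of h] show ?thesis by simp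
  next
    case False
    with that h show ?thesis
      by (intro image_eqI[of _ _ "2 * h - snd x - t"]) (auto simp: tree_geodesic_def h_def)
  qed
  ultimately show ?thesis
    unfolding tree_segment_def h_def by blast
qed

text \<open>The identity h(x,w) + h(w,y) = h(x,y) + a_w and the ultrametric inequality force the
  smaller of h(x,w), h(w,y) to be a_w, i.e. w lies on the ray of x or on that of y.\<close>
lemma mem_tree_segment_if_between:
  assumes xyw: "x \<in> Xset" "y \<in> Xset" "w \<in> Xset"
    and between: "rho x w + rho w y = rho x y"
  shows "w \<in> tree_segment x y"
proof -
  have sum: "join_height x w + join_height w y = join_height x y + snd w"
    using between rho_eq_join_height[OF xyw(1,3)] rho_eq_join_height[OF xyw(3,2)]
      rho_eq_join_height[OF xyw(1,2)] by linarith
  have ultra: "join_height x y \<le> max (join_height x w) (join_height w y)"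
    using join_height_ultra[OF xyw] .
  have ge: "snd x \<le> join_height x w" "snd w \<le> join_height x w"
    "snd w \<le> join_height w y" "snd y \<le> join_height w y"
    using join_height_ge[OF xyw(1,3)] join_height_ge[OF xyw(3,2)] by auto
  show ?thesis
  proof (cases "join_height x w \<le> join_height w y")
    case True
    with sum ultra ge have w: "join_height x w = snd w" "snd w \<le> join_height x y"
      by (auto simp: max_def)
    then have "w = trunc x (snd w)"
      using trunc_join_height[OF xyw(1,3)] trunc_snd[OF xyw(3)] by simp
    with ge w show ?thesis
      unfolding tree_segment_def by (intro UnI1 image_eqI[of _ _ "snd w"]) auto
  next
    case False
    with sum ultra ge have w: "join_height w y = snd w" "snd w \<le> join_height x y"
      by (auto simp: max_def)
    then have "w = trunc y (snd w)"
      using trunc_join_height[OF xyw(3,2)] trunc_snd[OF xyw(3)] by simp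
    with ge w show ?thesis
      unfolding tree_segment_def by (intro UnI2 image_eqI[of _ _ "snd w"]) auto
  qed
qed

lemma geodesic_segment_eq_tree_segment:
  assumes xy: "x \<in> Xset" "y \<in> Xset" and "geodesic_segment Xset rho x y A"
  shows "A = tree_segment x y"
proof -
  let ?D = "rho x y" and ?\<sigma> = "tree_geodesic x y"
  obtain \<gamma> where \<gamma>: "\<forall>t\<in>{0..?D}. \<gamma> t \<in> Xset" "\<gamma> 0 = x" "\<gamma> ?D = y"
    "\<forall>s\<in>{0..?D}. \<forall>t\<in>{0..?D}. rho (\<gamma> s) (\<gamma> t) = \<bar>s - t\<bar>" "A = \<gamma> ` {0..?D}"
    using assms(3) unfolding geodesic_segment_def by blast
  have "\<gamma> s = ?\<sigma> s" if s: "s \<in> {0..?D}" for s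
  proof -
    have dist_\<gamma>: "rho x (\<gamma> s) = s" "rho (\<gamma> s) y = ?D - s"
      using \<gamma>(2,3) \<gamma>(4)[rule_format, of 0 s] \<gamma>(4)[rule_format, of s ?D] s by auto
    then have "rho x (\<gamma> s) + rho (\<gamma> s) y = ?D"
      by simp
    with xy \<gamma>(1) s have "\<gamma> s \<in> ?\<sigma> ` {0..?D}"
      by (simp add: mem_tree_segment_if_between tree_geodesic_image)
    then obtain s' where s': "s' \<in> {0..?D}" "\<gamma> s = ?\<sigma> s'"
      by blast
    have "s' = rho x (?\<sigma> s')"
      using tree_geodesic_isometric[OF xy, of 0 s'] s' by (simp add: tree_geodesic_0[OF xy])
    also have "\<dots> = s"
      using s'(2) dist_\<gamma>(1) by simp
    finally show ?thesis
      using s' by simp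
  qed
  then have "A = ?\<sigma> ` {0..?D}"
    unfolding \<gamma>(5) by (rule image_cong[OF refl])
  then show ?thesis
    using tree_geodesic_image[OF xy] by simp
qed

text \<open>A point of the ray of x below h(x,y) lies below h(x,z), or else above h(x,z), where the
  rays of x and z have merged, and then below h(z,y) by the ultrametric inequality.\<close>
lemma trunc_mem_tree_segment_tripod:
  assumes xyz: "x \<in> Xset" "y \<in> Xset" "z \<in> Xset" and t: "t \<in> {snd x..join_height x y}"
  shows "trunc x t \<in> tree_segment x z \<union> tree_segment z y"
proof (cases "t \<le> join_height x z")
  case True
  with t show ?thesis
    by (auto simp: tree_segment_def)
next
  case False
  then have "t \<le> join_height z y"
    using t join_height_ultra[OF xyz] by auto
  moreover have "trunc x t = trunc z t" "snd z \<le> t"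
    using False t join_height_ge[OF xyz(1,3)] trunc_eq_iff_join_height_le[OF xyz(1,3), of t]
    by auto
  ultimately show ?thesis
    by (auto simp: tree_segment_def)
qed

lemma tree_segment_commute: "tree_segment x y = tree_segment y x"
  by (auto simp: tree_segment_def join_height_commute)

lemma tree_segment_subset_Un:
  assumes "x \<in> Xset" "y \<in> Xset" "z \<in> Xset"
  shows "tree_segment x y \<subseteq> tree_segment x z \<union> tree_segment z y"
proof
  fix w assume "w \<in> tree_segment x y"
  then consider t where "t \<in> {snd x..join_height x y}" "w = trunc x t"
    | t where "t \<in> {snd y..join_height y x}" "w = trunc y t"
    unfolding tree_segment_def by (auto simp: join_height_commute)
  then show "w \<in> tree_segment x z \<union> tree_segment z y"
  proof cases
    case 1
    then show ?thesis
      using trunc_mem_tree_segment_tripod[OF assms] by simp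
  next
    case 2
    then have "w \<in> tree_segment y z \<union> tree_segment z x"
      using trunc_mem_tree_segment_tripod[OF assms(2,1,3)] by simp
    then show ?thesis
      by (auto simp: tree_segment_commute)
  qed
qed

theorem corollary1:
  shows "R_tree (Xset :: ('g::ab_group_add) pt set) rho"
  unfolding R_tree_def
proof (intro conjI ballI allI impI)
  show "Metric_space (Xset :: 'g pt set) rho"
    by (rule Metric_space_Xset)
next
  fix x y :: "'g pt" assume "x \<in> Xset" "y \<in> Xset"
  then show "\<exists>!A. geodesic_segment Xset rho x y A"
    using geodesic_segment_tree_geodesic geodesic_segment_eq_tree_segment by metis
next
  fix x y z :: "'g pt" and A B C
  assume "x \<in> Xset" "y \<in> Xset" "z \<in> Xset"
    and "geodesic_segment Xset rho x y A \<and> geodesic_segment Xset rho x z B \<and>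
      geodesic_segment Xset rho z y C"
  then show "A \<subseteq> B \<union> C"
    using geodesic_segment_eq_tree_segment tree_segment_subset_Un by metis
qed

end
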